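(* Let $(X,m)$ be a configuration of particles with $X=\{x_1,\ldots,x_n\}\subset\mathbb{R}^N$ distinct points, nonzero masses $m_i$, total mass $\mu_0=\sum_i m_i\neq0$, and exponent $a\in\mathbb{R}\setminus\{0\}$. Then $(X,m)$ is a central configuration if and only if there exists $\lambda\in\mathbb{R}$ such that, with $S_{ij}=s_{ij}^a-\lambda/\mu_0$, each weighted system $(X,C_j)$, $j=1,\ldots,n$, defined by $C_j(x_i)=m_iS_{ij}$ for $i\neq j$ and $C_j(x_j)=-\sum_{i\neq j}m_iS_{ij}$, has identically zero first moment.
   Context: $s_{ij}=\overrightarrow{x_ix_j}^2$. The accelerations are $\overrightarrow{\gamma}_j=-\sum_{i\neq j}m_is_{ij}^a\overrightarrow{x_ix_j}$. $(X,m)$ is a central configuration if there exist a vector $\overrightarrow{\gamma}_O$, a point $x_O$ and a real number $\lambda$ with $\overrightarrow{\gamma}_j-\overrightarrow{\gamma}_O=\lambda\overrightarrow{x_Ox_j}$ for all $j$. The first moment of a weighted system $(X,w)$ is $\mu_1(p)=\sum_iw(x_i)\overrightarrow{px_i}$. *)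

theory Defs
  imports "HOL-Analysis.Analysis"
begin

text \<open>A configuration of n particles: positions x i and masses m i, for i < n.
  s_ij = |x_j - x_i|^2 (squared distance).\<close>

definition sqd :: "(nat \<Rightarrow> 'a::euclidean_space) \<Rightarrow> nat \<Rightarrow> nat \<Rightarrow> real" where
  "sqd x i j = (norm (x j - x i))\<^sup>2"

definition accel :: "nat \<Rightarrow> (nat \<Rightarrow> 'a::euclidean_space) \<Rightarrow> (nat \<Rightarrow> real) \<Rightarrow> real \<Rightarrow> nat \<Rightarrow> 'a" where
  "accel n x m a j = - (\<Sum>i\<in>{..<n} - {j}. (m i * (sqd x i j powr a)) *\<^sub>R (x j - x i))"

definition central_config :: "nat \<Rightarrow> (nat \<Rightarrow> 'a::euclidean_space) \<Rightarrow> (nat \<Rightarrow> real) \<Rightarrow> real \<Rightarrow> bool" where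
  "central_config n x m a \<longleftrightarrow>
     (\<exists>gO xO (l::real). \<forall>j<n. accel n x m a j - gO = l *\<^sub>R (x j - xO))"

definition first_moment :: "nat \<Rightarrow> (nat \<Rightarrow> 'a::euclidean_space) \<Rightarrow> (nat \<Rightarrow> real) \<Rightarrow> 'a \<Rightarrow> 'a" where
  "first_moment n x w p = (\<Sum>i<n. w i *\<^sub>R (x i - p))"

definition Cweight :: "nat \<Rightarrow> (nat \<Rightarrow> 'a::euclidean_space) \<Rightarrow> (nat \<Rightarrow> real) \<Rightarrow> real \<Rightarrow> real \<Rightarrow> nat \<Rightarrow> nat \<Rightarrow> real" where
  "Cweight n x m a l j i =
     (let S = (\<lambda>k. sqd x k j powr a - l / (\<Sum>k<n. m k)) in
      if i \<noteq> j then m i * S i else - (\<Sum>k\<in>{..<n} - {j}. m k * S k))"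

end

theory Submission
  imports Defs
begin

text \<open>Since the weights \<open>C\<^sub>j\<close> sum to zero, the first moment of \<open>(X, C\<^sub>j)\<close> does not depend
  on the base point; evaluated at \<open>x\<^sub>j\<close> it equals \<open>\<gamma>\<^sub>j - \<lambda> (c - x\<^sub>j)\<close>, where \<open>c\<close> is the
  centre of mass. So the moment condition says \<open>\<gamma>\<^sub>j = \<lambda> (c - x\<^sub>j)\<close> for all \<open>j\<close>. On the other hand
  the mutual forces cancel, \<open>\<Sum>\<^sub>j m\<^sub>j \<gamma>\<^sub>j = 0\<close>, so summing \<open>\<gamma>\<^sub>j - \<gamma>\<^sub>O = \<lambda>' (x\<^sub>j - x\<^sub>O)\<close> against the
  masses gives \<open>\<gamma>\<^sub>O = \<lambda>' (x\<^sub>O - c)\<close>, i.e. \<open>\<gamma>\<^sub>j = \<lambda>' (x\<^sub>j - c)\<close>: every central configuration is of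
  that form with \<open>\<lambda> = -\<lambda>'\<close>.\<close>

definition center_of_mass :: "nat \<Rightarrow> (nat \<Rightarrow> 'a::euclidean_space) \<Rightarrow> (nat \<Rightarrow> real) \<Rightarrow> 'a" where
  "center_of_mass n x m = (1 / (\<Sum>i<n. m i)) *\<^sub>R (\<Sum>i<n. m i *\<^sub>R x i)"

lemma first_moment_change_point:
  "first_moment n x w p = first_moment n x w q + (\<Sum>i<n. w i) *\<^sub>R (q - p)"
  unfolding first_moment_def scaleR_sum_left sum.distrib[symmetric]
  by (rule sum.cong) (auto simp: algebra_simps)

lemma first_moment_eq_center_of_mass:
  assumes "(\<Sum>i<n. m i) \<noteq> 0"
  shows "first_moment n x m p = (\<Sum>i<n. m i) *\<^sub>R (center_of_mass n x m - p)"
  using assms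
  by (simp add: first_moment_def center_of_mass_def scaleR_diff_right sum_subtractf
      scaleR_sum_left[symmetric])

lemma sum_antisym_eq_0:
  fixes F :: "'i \<Rightarrow> 'i \<Rightarrow> 'v::real_vector"
  assumes "\<And>i j. F i j = - F j i"
  shows "(\<Sum>i\<in>A. \<Sum>j\<in>A. F i j) = 0"
proof -
  define B where "B = (\<Sum>i\<in>A. \<Sum>j\<in>A. F i j)"
  have "B = (\<Sum>j\<in>A. \<Sum>i\<in>A. F i j)"
    unfolding B_def by (rule sum.swap)
  also have "\<dots> = - B"
    unfolding B_def sum_negf[symmetric] by (intro sum.cong refl assms)
  finally have "(2::real) *\<^sub>R B = 0"
    by (simp add: scaleR_2 eq_neg_iff_add_eq_0)
  then show ?thesis
    unfolding B_def by simp
qed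

lemma sqd_commute: "sqd x i j = sqd x j i"
  unfolding sqd_def by (simp add: norm_minus_commute)

lemma accel_eq_sum:
  "accel n x m a j = (\<Sum>i<n. (m i * sqd x i j powr a) *\<^sub>R (x i - x j))"
proof -
  have "accel n x m a j = (\<Sum>i\<in>{..<n} - {j}. (m i * sqd x i j powr a) *\<^sub>R (x i - x j))"
    unfolding accel_def by (simp add: sum_negf[symmetric] scaleR_diff_right)
  also have "\<dots> = (\<Sum>i<n. (m i * sqd x i j powr a) *\<^sub>R (x i - x j))"
    by (rule sum.mono_neutral_left) auto
  finally show ?thesis .
qed

lemma sum_mass_accel_eq_0: "(\<Sum>j<n. m j *\<^sub>R accel n x m a j) = 0"
proof -
  have "(\<Sum>j<n. m j *\<^sub>R accel n x m a j)
      = (\<Sum>j<n. \<Sum>i<n. (m j * m i * sqd x i j powr a) *\<^sub>R (x i - x j))"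
    by (simp add: accel_eq_sum scaleR_sum_right mult.assoc)
  also have "\<dots> = 0"
    by (rule sum_antisym_eq_0)
      (simp add: sqd_commute[of x] mult.commute mult.left_commute scaleR_diff_right)
  finally show ?thesis .
qed

lemma sum_Cweight_eq_0:
  assumes "j < n"
  shows "(\<Sum>i<n. Cweight n x m a l j i) = 0"
proof -
  have "(\<Sum>i<n. Cweight n x m a l j i)
      = Cweight n x m a l j j + (\<Sum>i\<in>{..<n} - {j}. Cweight n x m a l j i)"
    using assms by (simp add: sum.remove)
  then show ?thesis
    by (simp add: Cweight_def Let_def)
qed

lemma first_moment_Cweight:
  assumes "j < n" and "(\<Sum>i<n. m i) \<noteq> 0"
  shows "first_moment n x (Cweight n x m a l j) p
       = accel n x m a j - l *\<^sub>R (center_of_mass n x m - x j)"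
proof -
  define M where "M = (\<Sum>i<n. m i)"
  have "first_moment n x (Cweight n x m a l j) p = first_moment n x (Cweight n x m a l j) (x j)"
    by (subst first_moment_change_point[where q = "x j"]) (simp add: sum_Cweight_eq_0 assms(1))
  also have "\<dots> = (\<Sum>i<n. (m i * (sqd x i j powr a - l / M)) *\<^sub>R (x i - x j))"
    unfolding first_moment_def by (rule sum.cong) (auto simp: Cweight_def M_def)
  also have "\<dots> = accel n x m a j - (l / M) *\<^sub>R first_moment n x m (x j)"
    unfolding accel_eq_sum first_moment_def scaleR_sum_right sum_subtractf[symmetric]
    by (rule sum.cong) (auto simp: algebra_simps)
  also have "\<dots> = accel n x m a j - l *\<^sub>R (center_of_mass n x m - x j)"
    using assms(2) by (simp add: first_moment_eq_center_of_mass M_def)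
  finally show ?thesis .
qed

lemma affine_field_centered:
  assumes balanced: "(\<Sum>j<n. m j *\<^sub>R g j) = 0" and mass_nonzero: "(\<Sum>i<n. m i) \<noteq> 0"
    and affine: "\<forall>j<n. g j - gO = l *\<^sub>R (x j - xO)"
  shows "\<forall>j<n. g j = l *\<^sub>R (x j - center_of_mass n x m)"
proof -
  define M where "M = (\<Sum>i<n. m i)"
  define c where "c = center_of_mass n x m"
  have g: "g j = gO + l *\<^sub>R (x j - xO)" if "j < n" for j
    using affine that by (metis diff_add_cancel add.commute)
  have "(\<Sum>j<n. m j *\<^sub>R g j) = (\<Sum>j<n. m j *\<^sub>R gO + l *\<^sub>R (m j *\<^sub>R (x j - xO)))"
    by (rule sum.cong) (simp_all add: g algebra_simps)
  then have "0 = (\<Sum>j<n. m j *\<^sub>R gO + l *\<^sub>R (m j *\<^sub>R (x j - xO)))"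
    using balanced by simp
  also have "\<dots> = M *\<^sub>R gO + l *\<^sub>R first_moment n x m xO"
    by (simp add: sum.distrib scaleR_sum_left scaleR_sum_right first_moment_def M_def)
  also have "\<dots> = M *\<^sub>R (gO + l *\<^sub>R (c - xO))"
    using mass_nonzero by (simp add: first_moment_eq_center_of_mass M_def c_def algebra_simps)
  finally have "gO = - l *\<^sub>R (c - xO)"
    using mass_nonzero by (simp add: M_def eq_neg_iff_add_eq_0)
  then show ?thesis
    by (simp add: g c_def algebra_simps)
qed

lemma central_config_iff_center_of_mass:
  assumes "(\<Sum>i<n. m i) \<noteq> 0"
  shows "central_config n x m a \<longleftrightarrow>
         (\<exists>l. \<forall>j<n. accel n x m a j = l *\<^sub>R (center_of_mass n x m - x j))"
proof
  assume "central_config n x m a"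
  then obtain gO xO l where "\<forall>j<n. accel n x m a j - gO = l *\<^sub>R (x j - xO)"
    unfolding central_config_def by blast
  then have "\<forall>j<n. accel n x m a j = (- l) *\<^sub>R (center_of_mass n x m - x j)"
    using affine_field_centered[OF sum_mass_accel_eq_0 assms] by (simp add: scaleR_diff_right)
  then show "\<exists>l. \<forall>j<n. accel n x m a j = l *\<^sub>R (center_of_mass n x m - x j)" ..
next
  assume "\<exists>l. \<forall>j<n. accel n x m a j = l *\<^sub>R (center_of_mass n x m - x j)"
  then obtain l where "\<forall>j<n. accel n x m a j - 0 = (- l) *\<^sub>R (x j - center_of_mass n x m)"
    by (auto simp: scaleR_diff_right)
  then show "central_config n x m a"
    unfolding central_config_def by blast
qed

theorem theorem5p2:
  fixes n :: nat and x :: "nat \<Rightarrow> 'a::euclidean_space" and m :: "nat \<Rightarrow> real" and a :: real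
  assumes "inj_on x {..<n}"
    and "\<forall>i<n. m i \<noteq> 0"
    and "(\<Sum>i<n. m i) \<noteq> 0"
    and "a \<noteq> 0"
  shows "central_config n x m a \<longleftrightarrow>
         (\<exists>l::real. \<forall>j<n. \<forall>p. first_moment n x (Cweight n x m a l j) p = 0)"
proof -
  have moment_eq_0_iff: "first_moment n x (Cweight n x m a l j) p = 0
      \<longleftrightarrow> accel n x m a j = l *\<^sub>R (center_of_mass n x m - x j)" if "j < n" for l j p
    unfolding first_moment_Cweight[OF that assms(3)] right_minus_eq ..
  show ?thesis
    unfolding central_config_iff_center_of_mass[OF assms(3)] by (simp add: moment_eq_0_iff)
qed

end
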